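(* Let $\vec n\in\mathbb{R}^3$ be a unit vector, $\vec\sigma=(\sigma_1,\sigma_2,\sigma_3)$ the Pauli matrices, $J=\vec n\cdot\frac{\vec\sigma}{2}$ and $U_\theta=e^{-i\theta J}$ for $\theta\in\Theta=[0,2\pi)$. Let $\rho=|\psi\rangle\langle\psi|=\frac12\left(I+\vec a\cdot\vec\sigma\right)$ be a pure qubit state with $\|\vec a\|=1$ and $\vec a\cdot\vec n\neq\pm1$, and let $\rho_\theta=U_\theta\rho U_\theta^\dagger$. Let $P_{\pm\frac12}=\frac12(I\pm\vec n\cdot\vec\sigma)$ be the spectral projectors of $J$ for the eigenvalues $\pm\frac12$, and define the POVM on $\Theta$ $$M_*(d\hat\theta)=\frac{d\hat\theta}{2\pi}\sum_{j,k\in\{-\frac12,\frac12\}} e^{i\hat\theta(k-j)}\,\frac{P_j\rho P_k}{\sqrt{\mathrm{Tr}[P_j\rho]\,\mathrm{Tr}[P_k\rho]}}.$$ Then for every POVM $M$ with outcomes in $\Theta$ that is covariant with respect to $\{U_\theta\}_{\theta\in\Theta}$, $$F(\theta;M)\le F(\theta;M_* ).$$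
   Context: $\Theta=[0,2\pi)$ is regarded as the group of addition modulo $2\pi$, acting on itself, with unitary representation $\theta\mapsto U_\theta$ on $\mathbb{C}^2$. A POVM $M$ with outcomes in $\Theta$ is a family of positive operators $M(B)$ indexed by Borel sets $B\subseteq\Theta$, countably additive, with $M(\Theta)=I$. It is covariant with respect to $\{U_g\}$ if $M(B g^{-1})=U_g^\dagger M(B)U_g$ for all Borel $B$ and all $g\in\Theta$, where $Bg^{-1}=\{\theta: \theta= g+\theta' \bmod 2\pi,\ \theta'\in B\}$. Given the state $\rho_\theta$, the outcome distribution is $p(d\hat\theta\mid\theta)=\mathrm{Tr}[M(d\hat\theta)\rho_\theta]$, and the (classical) Fisher information of $M$ at $\theta$ is $F(\theta;M)=\int_\Theta \left(\partial_\theta \log p(\hat\theta\mid\theta)\right)^2 p(d\hat\theta\mid\theta)$, where $p(\hat\theta\mid\theta)$ is the density of $p(d\hat\theta\mid\theta)$. *)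

theory Defs
  imports "HOL-Analysis.Analysis"
begin

type_synonym cmat = "complex^2^2"

definition smat :: "complex \<Rightarrow> cmat \<Rightarrow> cmat" where
  "smat c A = (\<chi> i j. c * A$i$j)"

definition adj :: "cmat \<Rightarrow> cmat" where
  "adj A = (\<chi> i j. cnj (A$j$i))"

fun mpow :: "cmat \<Rightarrow> nat \<Rightarrow> cmat" where
  "mpow A 0 = mat 1"
| "mpow A (Suc k) = A ** mpow A k"

definition mexp :: "cmat \<Rightarrow> cmat" where
  "mexp A = (\<Sum>k. smat (1 / of_nat (fact k)) (mpow A k))"

definition psd :: "cmat \<Rightarrow> bool" where
  "psd A \<longleftrightarrow> (\<forall>v::complex^2. let q = (\<Sum>i\<in>UNIV. cnj (v$i) * (A *v v)$i)
                                  in Im q = 0 \<and> Re q \<ge> 0)"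

definition sigma1 :: cmat where
  "sigma1 = (\<chi> i j. if i = j then 0 else 1)"
definition sigma2 :: cmat where
  "sigma2 = (\<chi> i j. if i = j then 0 else if i = 1 then - \<i> else \<i>)"
definition sigma3 :: cmat where
  "sigma3 = (\<chi> i j. if i \<noteq> j then 0 else if i = 1 then 1 else -1)"

definition pauli_dot :: "real^3 \<Rightarrow> cmat" where
  "pauli_dot v = smat (of_real (v$1)) sigma1 + smat (of_real (v$2)) sigma2
                 + smat (of_real (v$3)) sigma3"

definition Jop :: "real^3 \<Rightarrow> cmat" where
  "Jop n = smat (1/2) (pauli_dot n)"

definition Uop :: "real^3 \<Rightarrow> real \<Rightarrow> cmat" where
  "Uop n \<theta> = mexp (smat (- \<i> * of_real \<theta>) (Jop n))"

definition bloch :: "real^3 \<Rightarrow> cmat" where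
  "bloch a = smat (1/2) (mat 1 + pauli_dot a)"

definition rho_t :: "real^3 \<Rightarrow> real^3 \<Rightarrow> real \<Rightarrow> cmat" where
  "rho_t n a \<theta> = Uop n \<theta> ** bloch a ** adj (Uop n \<theta>)"

text \<open>Spectral projectors \<open>P_{\<plusminus>1/2} = (I \<plusminus> n\<cdot>\<sigma>)/2\<close>, indexed by the eigenvalue j.\<close>
definition Proj :: "real^3 \<Rightarrow> real \<Rightarrow> cmat" where
  "Proj n j = (if j = 1/2 then smat (1/2) (mat 1 + pauli_dot n)
               else smat (1/2) (mat 1 - pauli_dot n))"

definition Theta :: "real set" where
  "Theta = {0..<2*pi}"

definition is_povm :: "(real set \<Rightarrow> cmat) \<Rightarrow> bool" where
  "is_povm M \<longleftrightarrow>
     (\<forall>B. B \<in> sets borel \<and> B \<subseteq> Theta \<longrightarrow> psd (M B)) \<and>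
     M Theta = mat 1 \<and>
     (\<forall>A::nat \<Rightarrow> real set. (\<forall>k. A k \<in> sets borel \<and> A k \<subseteq> Theta) \<and> disjoint_family A
        \<longrightarrow> (\<lambda>k. M (A k)) sums M (\<Union>k. A k))"

text \<open>\<open>B g\<^sup>-\<^sup>1 = {\<theta>. \<theta> = g + \<theta>' mod 2\<pi>, \<theta>' \<in> B}\<close>\<close>
definition shift_set :: "real \<Rightarrow> real set \<Rightarrow> real set" where
  "shift_set g B = {\<theta> \<in> Theta. \<exists>\<theta>'\<in>B. \<exists>k::int. \<theta> = g + \<theta>' + 2 * pi * of_int k}"

definition covariant :: "real^3 \<Rightarrow> (real set \<Rightarrow> cmat) \<Rightarrow> bool" where
  "covariant n M \<longleftrightarrow>
     (\<forall>B g. B \<in> sets borel \<and> B \<subseteq> Theta \<and> g \<in> Theta \<longrightarrow>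
        M (shift_set g B) = adj (Uop n g) ** M B ** Uop n g)"

definition is_density ::
  "real^3 \<Rightarrow> real^3 \<Rightarrow> (real set \<Rightarrow> cmat) \<Rightarrow> (real \<Rightarrow> real \<Rightarrow> real) \<Rightarrow> bool" where
  "is_density n a M p \<longleftrightarrow>
     (\<forall>t. (\<forall>x\<in>Theta. p t x \<ge> 0) \<and> set_integrable lborel Theta (p t) \<and>
          (\<forall>B. B \<in> sets borel \<and> B \<subseteq> Theta \<longrightarrow>
               trace (M B ** rho_t n a t) = complex_of_real (LINT x:B|lborel. p t x)))"

definition diff_density :: "(real \<Rightarrow> real \<Rightarrow> real) \<Rightarrow> real \<Rightarrow> bool" where
  "diff_density p \<theta> \<longleftrightarrow> (AE x in lborel. x \<in> Theta \<longrightarrow> (\<lambda>t. p t x) differentiable (at \<theta>))"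

text \<open>Classical Fisher information \<open>\<integral> (\<partial>\<^sub>\<theta> log p)\<^sup>2 p = \<integral> (\<partial>\<^sub>\<theta> p)\<^sup>2 / p\<close>.\<close>
definition fisher :: "(real \<Rightarrow> real \<Rightarrow> real) \<Rightarrow> real \<Rightarrow> ennreal" where
  "fisher p \<theta> = (\<integral>\<^sup>+ x \<in> Theta. ennreal ((deriv (\<lambda>t. p t x) \<theta>)\<^sup>2 / p \<theta> x) \<partial>lborel)"

definition Mstar_dens :: "real^3 \<Rightarrow> real^3 \<Rightarrow> real \<Rightarrow> cmat" where
  "Mstar_dens n a x = smat (1 / (2 * of_real pi))
     (\<Sum>j\<in>{-1/2, 1/2::real}. \<Sum>k\<in>{-1/2, 1/2::real}.
        smat (exp (\<i> * of_real (x * (k - j)))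
              / of_real (sqrt (Re (trace (Proj n j ** bloch a)) * Re (trace (Proj n k ** bloch a)))))
             (Proj n j ** bloch a ** Proj n k))"

definition Mstar :: "real^3 \<Rightarrow> real^3 \<Rightarrow> real set \<Rightarrow> cmat" where
  "Mstar n a B = (LINT x:B|lborel. Mstar_dens n a x)"

end

theory Submission
  imports Defs "HOL-Real_Asymp.Real_Asymp"
begin

text \<open>
  With the spectral projectors P+ and P- of J one has U_t = exp(-it/2) P+ + exp(it/2) P-, so
  conjugation by U_t fixes the diagonal blocks P+ rho P+, P- rho P- and multiplies P+ rho P- by
  exp(-it). For a covariant POVM M the weights Tr[M[0,s) P+- rho P+-] are nonnegative and
  additive in s, hence linear, while the coherence c(s) = Tr[M[0,s) P+ rho P-] satisfies the
  cocycle identity c(g + s) = c(g) + exp(-ig) c(s), whose solutions are kappa (1 - exp(-is)).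
  Positivity of M[0,s) and purity of rho bound |c(s)|^2 by the product of the two weights, and
  letting s tend to 0 gives 4 pi |kappa| <= sqrt(1 - (a.n)^2). Hence M produces the cardioid
  density (1 + r cos(x + theta - phi)) / (2 pi) with r <= sqrt(1 - (a.n)^2), and M_* attains
  this bound. The Fisher information of a cardioid family does not depend on its phase and is
  increasing in r.
\<close>

lemma cmat_eqI:
  "(A::cmat)$1$1 = B$1$1 \<Longrightarrow> A$1$2 = B$1$2 \<Longrightarrow> A$2$1 = B$2$1 \<Longrightarrow> A$2$2 = B$2$2
    \<Longrightarrow> A = B"
  by (simp add: vec_eq_iff forall_2)

lemma cmat_mult_entry: "((A::cmat) ** B)$i$j = A$i$1 * B$1$j + A$i$2 * B$2$j"
  by (simp add: matrix_matrix_mult_def sum_2)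

lemma cmat_one_entries:
  "(mat 1::cmat)$1$1 = 1" "(mat 1::cmat)$1$2 = 0" "(mat 1::cmat)$2$1 = 0" "(mat 1::cmat)$2$2 = 1"
  by (simp_all add: mat_def)

lemma smat_entry: "smat c A $i$j = c * A$i$j"
  by (simp add: smat_def)

lemma adj_entry: "adj A $i$j = cnj (A$j$i)"
  by (simp add: adj_def)

lemma pauli_dot_entries:
  "pauli_dot v $1$1 = of_real (v$3)"
  "pauli_dot v $1$2 = of_real (v$1) - \<i> * of_real (v$2)"
  "pauli_dot v $2$1 = of_real (v$1) + \<i> * of_real (v$2)"
  "pauli_dot v $2$2 = - of_real (v$3)"
  by (simp_all add: pauli_dot_def smat_def sigma1_def sigma2_def sigma3_def)

lemma smat_mult_left: "smat c A ** B = smat c (A ** B)"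
  by (simp add: smat_def matrix_matrix_mult_def vec_eq_iff sum_distrib_left mult.assoc)

lemma smat_mult_right: "A ** smat c B = smat c (A ** B)"
  by (simp add: smat_def matrix_matrix_mult_def vec_eq_iff sum_distrib_left mult.left_commute)

lemma smat_smat: "smat c (smat d A) = smat (c * d) A"
  by (simp add: smat_def vec_eq_iff mult.assoc)

lemma smat_add_right: "smat c (A + B) = smat c A + smat c B"
  by (simp add: smat_def vec_eq_iff algebra_simps)

lemma smat_add_left: "smat (c + d) A = smat c A + smat d A"
  by (simp add: smat_def vec_eq_iff algebra_simps)

lemma smat_one [simp]: "smat 1 A = A"
  by (simp add: smat_def vec_eq_iff)

lemma smat_zero [simp]: "smat 0 A = 0"
  by (simp add: smat_def vec_eq_iff)

lemma smat_zero_right [simp]: "smat c 0 = 0"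
  by (simp add: smat_def vec_eq_iff)

lemma smat_sum: "(\<Sum>k\<in>S. smat (f k) A) = smat (sum f S) A"
  by (induction S rule: infinite_finite_induct) (simp_all add: smat_add_left)

lemma sums_smat: "f sums s \<Longrightarrow> (\<lambda>k. smat (f k) A) sums smat s A"
  unfolding sums_def smat_sum unfolding smat_def
  by (intro tendsto_vec_lambda tendsto_mult_right)

lemma cmat_add_mult: "(B + C) ** (A::cmat) = B ** A + C ** A"
  by (simp add: matrix_matrix_mult_def vec_eq_iff sum.distrib[symmetric] algebra_simps)

lemma sum_cmat_mult: "(\<Sum>k\<in>S. f k) ** (A::cmat) = (\<Sum>k\<in>S. f k ** A)"
  by (induction S rule: infinite_finite_induct) (simp_all add: cmat_add_mult)

lemma adj_mult: "adj (A ** B) = adj B ** adj A"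
  by (simp add: adj_def matrix_matrix_mult_def vec_eq_iff mult.commute)

lemma adj_smat: "adj (smat c A) = smat (cnj c) (adj A)"
  by (simp add: adj_def smat_def vec_eq_iff)

lemma adj_add: "adj (A + B) = adj A + adj B"
  by (simp add: adj_def vec_eq_iff)

lemma trace_smat: "trace (smat c A) = c * trace A"
  by (simp add: trace_def smat_def sum_distrib_left)

lemma trace_zero [simp]: "trace (0::cmat) = 0"
  by (simp add: trace_def)

lemma trace_sum: "trace (\<Sum>k\<in>S. f k) = (\<Sum>k\<in>S. trace (f k :: cmat))"
  by (induction S rule: infinite_finite_induct) (simp_all add: trace_add)

lemma trace_adj_sandwich_mult: "trace ((adj U ** A ** U) ** B) = trace (A ** (U ** B ** adj U))"
proof -
  have "trace ((adj U ** A ** U) ** B) = trace (adj U ** (A ** (U ** B)))"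
    by (simp add: matrix_mul_assoc)
  also have "\<dots> = trace ((A ** (U ** B)) ** adj U)"
    by (rule trace_mul_sym)
  finally show ?thesis
    by (simp add: matrix_mul_assoc)
qed

lemma trace_scaleR_mult: "trace ((r *\<^sub>R A) ** B) = r *\<^sub>R trace ((A::cmat) ** B)"
  by (simp add: trace_def matrix_matrix_mult_def scaleR_sum_right)

lemma bounded_linear_trace_mult: "bounded_linear (\<lambda>A::cmat. trace (A ** B))"
proof -
  have "linear (\<lambda>A::cmat. trace (A ** B))"
    by (rule linearI) (simp_all add: cmat_add_mult trace_add trace_scaleR_mult)
  then show ?thesis
    by (simp add: linear_conv_bounded_linear)
qed

lemma sandwich_eq_blocks:
  "(smat x P + smat y Q) ** Y ** (smat x' P + smat y' Q)
     = smat (x * x') (P ** Y ** P) + smat (y * y') (Q ** Y ** Q)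
       + smat (x * y') (P ** Y ** Q) + smat (y * x') (Q ** Y ** P)"
  by (simp add: matrix_add_ldistrib cmat_add_mult smat_mult_left smat_mult_right smat_smat
      smat_add_right mult.commute add_ac)

section \<open>Functions of a pair of complementary projections\<close>

locale complementary_projections =
  fixes P Q :: cmat
  assumes add_eq_one: "P + Q = mat 1"
    and P_idem: "P ** P = P" and Q_idem: "Q ** Q = Q"
    and PQ: "P ** Q = 0" and QP: "Q ** P = 0"
begin

lemma spectral_mult_P: "(smat x P + smat y Q) ** P = smat x P"
  by (simp add: cmat_add_mult smat_mult_left P_idem QP)

lemma spectral_mult_Q: "(smat x P + smat y Q) ** Q = smat y Q"
  by (simp add: cmat_add_mult smat_mult_left Q_idem PQ)

lemma P_mult_spectral: "P ** (smat x P + smat y Q) = smat x P"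
  by (simp add: matrix_add_ldistrib smat_mult_right P_idem PQ)

lemma Q_mult_spectral: "Q ** (smat x P + smat y Q) = smat y Q"
  by (simp add: matrix_add_ldistrib smat_mult_right Q_idem QP)

lemma spectral_mult:
  "(smat x P + smat y Q) ** (smat x' P + smat y' Q) = smat (x * x') P + smat (y * y') Q"
  by (simp add: matrix_add_ldistrib smat_mult_right spectral_mult_P spectral_mult_Q smat_smat
      mult.commute)

lemma mpow_spectral: "mpow (smat x P + smat y Q) k = smat (x ^ k) P + smat (y ^ k) Q"
  by (induction k) (simp_all add: add_eq_one spectral_mult mult.commute)

lemma mexp_spectral: "mexp (smat x P + smat y Q) = smat (exp x) P + smat (exp y) Q"
proof -
  have "(\<lambda>k. 1 / of_nat (fact k) * z ^ k) sums exp z" for z :: complex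
    using exp_converges[of z] by (simp add: scaleR_conv_of_real divide_inverse mult.commute)
  then have "(\<lambda>k. smat (1 / of_nat (fact k) * x ^ k) P + smat (1 / of_nat (fact k) * y ^ k) Q)
      sums (smat (exp x) P + smat (exp y) Q)"
    by (intro sums_add sums_smat)
  then show ?thesis
    unfolding mexp_def mpow_spectral smat_add_right smat_smat by (rule sums_unique[symmetric])
qed

lemma sandwich_blocks:
  fixes x y x' y' :: complex
  defines "W \<equiv> smat x P + smat y Q" and "W' \<equiv> smat x' P + smat y' Q"
  shows "W ** (P ** Y ** P) ** W' = smat (x * x') (P ** Y ** P)"
    and "W ** (Q ** Y ** Q) ** W' = smat (y * y') (Q ** Y ** Q)"
    and "W ** (P ** Y ** Q) ** W' = smat (x * y') (P ** Y ** Q)"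
    and "W ** (Q ** Y ** P) ** W' = smat (y * x') (Q ** Y ** P)"
  unfolding W_def W'_def matrix_mul_assoc spectral_mult_P spectral_mult_Q
  by (simp_all add: matrix_mul_assoc[symmetric] P_mult_spectral Q_mult_spectral smat_mult_left
      smat_mult_right smat_smat mult.commute)

lemma trace_PYP: "trace (P ** Y ** P) = trace (P ** Y)" and trace_QYQ: "trace (Q ** Y ** Q) = trace (Q ** Y)"
  using trace_mul_sym[of "P ** Y" P] trace_mul_sym[of "Q ** Y" Q]
  by (simp_all add: matrix_mul_assoc P_idem Q_idem)

end

section \<open>Spectral decomposition of the generator and pure states\<close>

definition Pplus :: "real^3 \<Rightarrow> cmat" where
  "Pplus n = Proj n (1/2)"

definition Pminus :: "real^3 \<Rightarrow> cmat" where
  "Pminus n = Proj n (-1/2)"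

abbreviation rho_pp :: "real^3 \<Rightarrow> real^3 \<Rightarrow> cmat" where
  "rho_pp n a \<equiv> Pplus n ** bloch a ** Pplus n"
abbreviation rho_mm :: "real^3 \<Rightarrow> real^3 \<Rightarrow> cmat" where
  "rho_mm n a \<equiv> Pminus n ** bloch a ** Pminus n"
abbreviation rho_pm :: "real^3 \<Rightarrow> real^3 \<Rightarrow> cmat" where
  "rho_pm n a \<equiv> Pplus n ** bloch a ** Pminus n"
abbreviation rho_mp :: "real^3 \<Rightarrow> real^3 \<Rightarrow> cmat" where
  "rho_mp n a \<equiv> Pminus n ** bloch a ** Pplus n"

lemma Pplus_entries:
  "Pplus n $1$1 = (1 + of_real (n$3)) / 2"
  "Pplus n $1$2 = (of_real (n$1) - \<i> * of_real (n$2)) / 2"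
  "Pplus n $2$1 = (of_real (n$1) + \<i> * of_real (n$2)) / 2"
  "Pplus n $2$2 = (1 - of_real (n$3)) / 2"
  by (simp_all add: Pplus_def Proj_def smat_entry cmat_one_entries pauli_dot_entries)

lemma Pminus_entries:
  "Pminus n $1$1 = (1 - of_real (n$3)) / 2"
  "Pminus n $1$2 = - (of_real (n$1) - \<i> * of_real (n$2)) / 2"
  "Pminus n $2$1 = - (of_real (n$1) + \<i> * of_real (n$2)) / 2"
  "Pminus n $2$2 = (1 + of_real (n$3)) / 2"
  by (simp_all add: Pminus_def Proj_def smat_entry cmat_one_entries pauli_dot_entries)

lemma bloch_entries:
  "bloch a $1$1 = (1 + of_real (a$3)) / 2"
  "bloch a $1$2 = (of_real (a$1) - \<i> * of_real (a$2)) / 2"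
  "bloch a $2$1 = (of_real (a$1) + \<i> * of_real (a$2)) / 2"
  "bloch a $2$2 = (1 - of_real (a$3)) / 2"
  by (simp_all add: bloch_def smat_entry cmat_one_entries pauli_dot_entries)

lemmas cmat_entries = cmat_mult_entry cmat_one_entries smat_entry adj_entry pauli_dot_entries
  Pplus_entries Pminus_entries bloch_entries

lemma unit_vector_components: "norm (v::real^3) = 1 \<Longrightarrow> v$1 * v$1 + v$2 * v$2 + v$3 * v$3 = 1"
  by (simp add: norm_vec_def L2_set_def sum_3 power2_eq_square)

lemma inner_vector_3: "inner (v::real^3) w = v$1 * w$1 + v$2 * w$2 + v$3 * w$3"
  by (simp add: inner_vec_def sum_3)

lemma adj_Pplus: "adj (Pplus n) = Pplus n"
  and adj_Pminus: "adj (Pminus n) = Pminus n"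
  and adj_bloch: "adj (bloch a) = bloch a"
  by (rule cmat_eqI; simp add: cmat_entries complex_eq_iff)+

lemma complementary_projections_Pplus_Pminus:
  assumes "norm n = 1"
  shows "complementary_projections (Pplus n) (Pminus n)"
  using unit_vector_components[OF assms]
  by unfold_locales
    (rule cmat_eqI; simp add: cmat_entries complex_eq_iff field_simps; algebra)+

lemma bloch_idem: "norm a = 1 \<Longrightarrow> bloch a ** bloch a = bloch a"
  using unit_vector_components[of a]
  by (intro cmat_eqI; simp add: cmat_entries complex_eq_iff field_simps; algebra)

lemma bloch_sandwich: "norm a = 1 \<Longrightarrow> bloch a ** X ** bloch a = smat (trace (X ** bloch a)) (bloch a)"
  using unit_vector_components[of a]
  by (intro cmat_eqI; simp add: cmat_entries trace_def sum_2 complex_eq_iff field_simps; algebra)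

lemma trace_mult_bloch_mult_bloch:
  assumes "norm a = 1"
  shows "trace (A ** bloch a ** B ** bloch a) = trace (A ** bloch a) * trace (B ** bloch a)"
proof -
  have "A ** bloch a ** B ** bloch a = A ** (bloch a ** B ** bloch a)"
    by (simp add: matrix_mul_assoc)
  then show ?thesis
    by (simp add: bloch_sandwich[OF assms] smat_mult_right trace_smat mult.commute)
qed

lemma trace_Pplus_bloch: "trace (Pplus n ** bloch a) = (1 + inner a n) / 2"
  and trace_Pminus_bloch: "trace (Pminus n ** bloch a) = (1 - inner a n) / 2"
  by (simp_all add: trace_def sum_2 cmat_entries inner_vector_3 complex_eq_iff field_simps)

lemma Jop_spectral: "Jop n = smat (1/2) (Pplus n) + smat (-1/2) (Pminus n)"
  by (rule cmat_eqI) (simp_all add: cmat_entries Jop_def field_simps)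

context
  fixes n :: "real^3"
  assumes unit_n: "norm n = 1"
begin

interpretation complementary_projections "Pplus n" "Pminus n"
  by (rule complementary_projections_Pplus_Pminus[OF unit_n])

lemma Uop_spectral:
  "Uop n t = smat (exp (- \<i> * t / 2)) (Pplus n) + smat (exp (\<i> * t / 2)) (Pminus n)"
proof -
  have "smat (- \<i> * t) (Jop n) = smat (- \<i> * t / 2) (Pplus n) + smat (\<i> * t / 2) (Pminus n)"
    by (simp add: Jop_spectral smat_add_right smat_smat)
  then show ?thesis
    by (simp add: Uop_def mexp_spectral)
qed

lemma adj_Uop: "adj (Uop n t) = Uop n (- t)"
  by (simp add: Uop_spectral adj_add adj_smat adj_Pplus adj_Pminus exp_cnj)

lemma Uop_add: "Uop n s ** Uop n t = Uop n (s + t)"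
proof -
  have "- \<i> * s / 2 + - \<i> * t / 2 = - \<i> * complex_of_real (s + t) / 2"
    and "\<i> * s / 2 + \<i> * t / 2 = \<i> * complex_of_real (s + t) / 2"
    by (simp_all add: field_simps)
  then show ?thesis
    by (simp only: Uop_spectral spectral_mult mult_exp_exp)
qed

lemma Uop_sandwich_blocks:
  "Uop n g ** (Pplus n ** Y ** Pplus n) ** adj (Uop n g) = Pplus n ** Y ** Pplus n"
  "Uop n g ** (Pminus n ** Y ** Pminus n) ** adj (Uop n g) = Pminus n ** Y ** Pminus n"
  "Uop n g ** (Pplus n ** Y ** Pminus n) ** adj (Uop n g) = smat (exp (- \<i> * g)) (Pplus n ** Y ** Pminus n)"
  "Uop n g ** (Pminus n ** Y ** Pplus n) ** adj (Uop n g) = smat (exp (\<i> * g)) (Pminus n ** Y ** Pplus n)"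
  unfolding adj_Uop by (simp_all add: Uop_spectral sandwich_blocks mult_exp_exp)

lemma Uop_sandwich_rho_t: "Uop n u ** rho_t n a t ** adj (Uop n u) = rho_t n a (u + t)"
proof -
  have "Uop n u ** rho_t n a t ** adj (Uop n u) = (Uop n u ** Uop n t) ** bloch a ** (adj (Uop n t) ** adj (Uop n u))"
    by (simp add: rho_t_def matrix_mul_assoc)
  also have "\<dots> = rho_t n a (u + t)"
    by (simp add: rho_t_def adj_mult[symmetric] Uop_add)
  finally show ?thesis .
qed

lemma rho_t_blocks:
  "rho_t n a t = rho_pp n a + rho_mm n a + smat (exp (- \<i> * t)) (rho_pm n a) + smat (exp (\<i> * t)) (rho_mp n a)"
  unfolding rho_t_def adj_Uop by (simp add: Uop_spectral sandwich_eq_blocks mult_exp_exp)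

lemma trace_Uop_adj_sandwich_blocks:
  "trace ((adj (Uop n g) ** E ** Uop n g) ** (Pplus n ** Y ** Pplus n)) = trace (E ** (Pplus n ** Y ** Pplus n))"
  "trace ((adj (Uop n g) ** E ** Uop n g) ** (Pminus n ** Y ** Pminus n)) = trace (E ** (Pminus n ** Y ** Pminus n))"
  "trace ((adj (Uop n g) ** E ** Uop n g) ** (Pplus n ** Y ** Pminus n))
     = exp (- \<i> * g) * trace (E ** (Pplus n ** Y ** Pminus n))"
  "trace ((adj (Uop n g) ** E ** Uop n g) ** (Pminus n ** Y ** Pplus n))
     = exp (\<i> * g) * trace (E ** (Pminus n ** Y ** Pplus n))"
  by (simp_all add: trace_adj_sandwich_mult Uop_sandwich_blocks smat_mult_right trace_smat)

lemma trace_mult_rho_t: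
  "trace (X ** rho_t n a t) = trace ((Uop n (- t) ** X ** adj (Uop n (- t))) ** bloch a)"
  using trace_adj_sandwich_mult[of "Uop n t" X "bloch a"] by (simp add: rho_t_def adj_Uop)

lemma trace_blocks_mult_rho_t:
  assumes "norm a = 1"
  shows "trace (rho_pp n a ** rho_t n a t) = trace (Pplus n ** bloch a) * trace (Pplus n ** bloch a)"
    and "trace (rho_mm n a ** rho_t n a t) = trace (Pminus n ** bloch a) * trace (Pminus n ** bloch a)"
    and "trace (rho_pm n a ** rho_t n a t)
           = exp (\<i> * t) * trace (Pplus n ** bloch a) * trace (Pminus n ** bloch a)"
    and "trace (rho_mp n a ** rho_t n a t)
           = exp (- \<i> * t) * trace (Pminus n ** bloch a) * trace (Pplus n ** bloch a)"
  by (simp_all add: trace_mult_rho_t Uop_sandwich_blocks smat_mult_left trace_smat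
      trace_mult_bloch_mult_bloch[OF assms])

end

section \<open>Positivity and the Cauchy-Schwarz inequality\<close>

lemma psd_trace_mult_gram:
  assumes "psd A"
  shows "Im (trace (A ** (W ** adj W))) = 0 \<and> 0 \<le> Re (trace (A ** (W ** adj W)))"
proof -
  define q where "q v = (\<Sum>i\<in>UNIV. cnj (v$i) * (A *v v)$i)" for v :: "complex^2"
  have q: "Im (q v) = 0 \<and> 0 \<le> Re (q v)" for v
    using assms unfolding psd_def q_def Let_def by blast
  have "trace (A ** (W ** adj W)) = q (\<chi> i. W$i$1) + q (\<chi> i. W$i$2)"
    unfolding q_def trace_def
    by (simp add: sum_2 matrix_matrix_mult_def matrix_vector_mult_def adj_def algebra_simps)
  then show ?thesis
    using q[of "\<chi> i. W$i$1"] q[of "\<chi> i. W$i$2"] by simp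
qed

lemma nonneg_quadratic_discriminant:
  fixes a b c :: real
  assumes nonneg: "\<And>\<tau>. 0 \<le> a * \<tau>\<^sup>2 + b * \<tau> + c"
  shows "0 \<le> a" and "b\<^sup>2 \<le> 4 * a * c"
proof -
  show "0 \<le> a"
  proof (rule ccontr)
    assume "\<not> 0 \<le> a"
    define \<tau> where "\<tau> = sqrt ((c + 1) / - a)"
    have "a * \<tau>\<^sup>2 + c = -1"
      using \<open>\<not> 0 \<le> a\<close> nonneg[of 0] by (simp add: \<tau>_def field_simps)
    then show False
      using nonneg[of \<tau>] nonneg[of "- \<tau>"] by simp
  qed
  show "b\<^sup>2 \<le> 4 * a * c"
  proof (cases "a = 0")
    case True
    have "b = 0"
    proof (rule ccontr)
      assume "b \<noteq> 0"
      then show False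
        using nonneg[of "- (c + 1) / b"] True by simp
    qed
    then show ?thesis
      using True by simp
  next
    case False
    then have "0 < a"
      using \<open>0 \<le> a\<close> by simp
    then show ?thesis
      using nonneg[of "- b / (2 * a)"] by (simp add: power2_eq_square field_simps)
  qed
qed

lemma nonneg_hermitian_form_cauchy_schwarz:
  fixes A B C D :: complex
  assumes form: "\<And>l. Im (l * cnj l * A + l * C + cnj l * D + B) = 0
                     \<and> 0 \<le> Re (l * cnj l * A + l * C + cnj l * D + B)"
  shows "Im A = 0 \<and> Im B = 0 \<and> D = cnj C \<and> 0 \<le> Re A \<and> 0 \<le> Re B \<and> (cmod C)\<^sup>2 \<le> Re A * Re B"
proof -
  have B: "Im B = 0" "0 \<le> Re B"
    using form[of 0] by auto
  have A: "Im A = 0"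
    using form[of 1] form[of "-1"] B by simp
  have D: "D = cnj C"
    using form[of 1] form[of \<i>] A B by (simp add: complex_eq_iff algebra_simps)
  have "0 \<le> Re A * \<tau>\<^sup>2 + 2 * Re C * \<tau> + Re B" for \<tau> :: real
    using form[of "of_real \<tau>"] D by (simp add: power2_eq_square algebra_simps)
  then have ReA: "0 \<le> Re A"
    by (rule nonneg_quadratic_discriminant)
  define c where "c = (Re C)\<^sup>2 + (Im C)\<^sup>2"
  have "0 \<le> c * Re A * \<tau>\<^sup>2 + (- 2 * c) * \<tau> + Re B" for \<tau> :: real
    using form[of "- of_real \<tau> * cnj C"] D A
    by (simp add: c_def power2_eq_square algebra_simps)
  then have "(- 2 * c)\<^sup>2 \<le> 4 * (c * Re A) * Re B"
    by (rule nonneg_quadratic_discriminant)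
  then have "c * c \<le> c * (Re A * Re B)"
    by (simp add: power2_eq_square algebra_simps)
  moreover have "0 \<le> c"
    by (simp add: c_def)
  ultimately have "c \<le> Re A * Re B"
    using ReA B by (cases "c = 0") (simp_all add: mult_le_cancel_left_pos)
  then show ?thesis
    using A B D ReA by (simp add: c_def cmod_power2)
qed

lemma psd_trace_blocks_cauchy_schwarz:
  assumes "norm n = 1" "norm a = 1" "psd E"
  defines "A \<equiv> trace (E ** rho_pp n a)" and "B \<equiv> trace (E ** rho_mm n a)"
    and "C \<equiv> trace (E ** rho_pm n a)" and "D \<equiv> trace (E ** rho_mp n a)"
  shows "Im A = 0 \<and> Im B = 0 \<and> D = cnj C \<and> 0 \<le> Re A \<and> 0 \<le> Re B \<and> (cmod C)\<^sup>2 \<le> Re A * Re B"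
proof (rule nonneg_hermitian_form_cauchy_schwarz)
  fix l :: complex
  define W where "W = (smat l (Pplus n) + smat 1 (Pminus n)) ** bloch a"
  have "W ** adj W
      = (smat l (Pplus n) + smat 1 (Pminus n)) ** (bloch a ** bloch a) ** (smat (cnj l) (Pplus n) + smat 1 (Pminus n))"
    by (simp add: W_def adj_mult adj_add adj_smat adj_Pplus adj_Pminus adj_bloch matrix_mul_assoc)
  also have "\<dots> = (smat l (Pplus n) + smat 1 (Pminus n)) ** bloch a ** (smat (cnj l) (Pplus n) + smat 1 (Pminus n))"
    by (simp only: bloch_idem[OF assms(2)])
  also have "\<dots> = smat (l * cnj l) (rho_pp n a) + smat (1 * 1) (rho_mm n a)
      + smat (l * 1) (rho_pm n a) + smat (1 * cnj l) (rho_mp n a)"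
    by (rule sandwich_eq_blocks)
  finally have "trace (E ** (W ** adj W)) = l * cnj l * A + l * C + cnj l * D + B"
    by (simp add: matrix_add_ldistrib smat_mult_right trace_add trace_smat A_def B_def C_def D_def)
  then show "Im (l * cnj l * A + l * C + cnj l * D + B) = 0 \<and> 0 \<le> Re (l * cnj l * A + l * C + cnj l * D + B)"
    using psd_trace_mult_gram[OF assms(3)] by metis
qed

lemma additive_on_interval_nat_mult:
  fixes f :: "real \<Rightarrow> real"
  assumes add: "\<And>g s. 0 \<le> g \<Longrightarrow> 0 \<le> s \<Longrightarrow> g + s \<le> L \<Longrightarrow> f (g + s) = f g + f s"
    and "0 \<le> s" "real k * s \<le> L"
  shows "f (real k * s) = real k * f s"
  using assms(3)
proof (induction k)
  case 0
  then show ?case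
    using add[of 0 0] by simp
next
  case (Suc k)
  have "real k * s \<le> L"
    using Suc.prems \<open>0 \<le> s\<close> by (simp add: algebra_simps)
  then show ?case
    using add[of "real k * s" s] Suc \<open>0 \<le> s\<close> by (simp add: algebra_simps)
qed

lemma nonneg_additive_on_interval_mono:
  fixes f :: "real \<Rightarrow> real"
  assumes add: "\<And>g s. 0 \<le> g \<Longrightarrow> 0 \<le> s \<Longrightarrow> g + s \<le> L \<Longrightarrow> f (g + s) = f g + f s"
    and nonneg: "\<And>s. 0 \<le> s \<Longrightarrow> s \<le> L \<Longrightarrow> 0 \<le> f s"
    and "0 \<le> x" "x \<le> y" "y \<le> L"
  shows "f x \<le> f y"
  using add[of x "y - x"] nonneg[of "y - x"] assms(3-5) by simp

lemma nonneg_additive_on_interval_approx: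
  fixes f :: "real \<Rightarrow> real"
  assumes add: "\<And>g s. 0 \<le> g \<Longrightarrow> 0 \<le> s \<Longrightarrow> g + s \<le> L \<Longrightarrow> f (g + s) = f g + f s"
    and nonneg: "\<And>s. 0 \<le> s \<Longrightarrow> s \<le> L \<Longrightarrow> 0 \<le> f s"
    and "0 < L" "0 \<le> s" "s \<le> L" "0 < N"
  shows "\<bar>f s - s * f L / L\<bar> \<le> f L / real N"
proof -
  define u where "u = L / real N"
  define w where "w = f L / L"
  define k where "k = nat \<lfloor>s / u\<rfloor>"
  have u: "0 < u" "u \<le> L" "real N * u = L"
    using assms(3,6) by (auto simp: u_def field_simps)
  have k: "real k * u \<le> s" "s < real k * u + u"
    using u floor_divide_lower[of u s] floor_divide_upper[of u s] assms(4)
    by (auto simp: k_def algebra_simps)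
  have fu: "f u = u * w"
    using additive_on_interval_nat_mult[OF add, where s = u and k = N] u assms(6)
    by (simp add: w_def field_simps)
  have fku: "f (real k * u) = real k * u * w"
    using additive_on_interval_nat_mult[OF add, where s = u and k = k] u k assms(5) fu by simp
  have split: "f s = f (real k * u) + f (s - real k * u)"
    using add[of "real k * u" "s - real k * u"] u k assms(5) by simp
  have "0 \<le> f (s - real k * u)"
    using nonneg[of "s - real k * u"] u k assms(5) by simp
  have "f (s - real k * u) \<le> f u"
    by (rule nonneg_additive_on_interval_mono[OF add nonneg]) (use u k in simp_all)
  have "0 \<le> w"
    using nonneg[of L] assms(3) by (simp add: w_def)
  moreover have "real k * u * w \<le> s * w" "s * w \<le> (real k * u + u) * w"
    using k \<open>0 \<le> w\<close> by (auto intro!: mult_right_mono)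
  moreover have "(real k * u + u) * w = real k * u * w + u * w"
    by (simp add: algebra_simps)
  moreover have "s * f L / L = s * w" "f L / real N = u * w"
    using assms(3) by (simp_all add: w_def u_def)
  ultimately show ?thesis
    using split fku fu \<open>0 \<le> f (s - real k * u)\<close> \<open>f (s - real k * u) \<le> f u\<close> by linarith
qed

lemma nonneg_additive_on_interval_linear:
  fixes f :: "real \<Rightarrow> real"
  assumes add: "\<And>g s. 0 \<le> g \<Longrightarrow> 0 \<le> s \<Longrightarrow> g + s \<le> L \<Longrightarrow> f (g + s) = f g + f s"
    and nonneg: "\<And>s. 0 \<le> s \<Longrightarrow> s \<le> L \<Longrightarrow> 0 \<le> f s"
    and "0 < L" "0 \<le> s" "s \<le> L"
  shows "f s = s * f L / L"
proof -
  have "\<bar>f s - s * f L / L\<bar> \<le> 0"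
  proof (rule LIMSEQ_le_const)
    show "(\<lambda>N. f L / real N) \<longlonglongrightarrow> 0"
      by (rule lim_const_over_n)
    show "\<exists>N0. \<forall>N\<ge>N0. \<bar>f s - s * f L / L\<bar> \<le> f L / real N"
      using nonneg_additive_on_interval_approx[OF add nonneg assms(3-5)] by (intro exI[of _ 1]) auto
  qed
  then show ?thesis
    by simp
qed

lemma exp_minus_i_pi: "exp (- (\<i> * complex_of_real pi)) = -1"
  by (simp add: complex_eq_iff Re_exp Im_exp)

text \<open>Comparing the splittings of \<open>[0, r + \<pi>)\<close> at \<open>r\<close> and at \<open>\<pi>\<close> determines \<open>c\<close>
  from \<open>c \<pi>\<close>.\<close>
lemma cocycle_on_circle_eq:
  fixes c :: "real \<Rightarrow> complex"
  assumes add: "\<And>g s. 0 \<le> g \<Longrightarrow> 0 \<le> s \<Longrightarrow> g + s \<le> 2 * pi \<Longrightarrow> g < 2 * pi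
                  \<Longrightarrow> c (g + s) = c g + exp (- \<i> * g) * c s"
    and s: "0 \<le> s" "s \<le> 2 * pi"
  shows "c s = c pi / 2 * (1 - exp (- \<i> * s))"
proof -
  have small: "c r = c pi / 2 * (1 - exp (- \<i> * r))" if "0 \<le> r" "r \<le> pi" for r
  proof -
    have "c (pi + r) = c pi - c r" "c (r + pi) = c r + exp (- \<i> * r) * c pi"
      using add[of pi r] add[of r pi] that pi_gt_zero exp_minus_i_pi by simp_all
    then have "2 * c r = c pi * (1 - exp (- \<i> * r))"
      by (simp add: add.commute algebra_simps)
    then show ?thesis
      by (simp add: field_simps)
  qed
  show ?thesis
  proof (cases "s \<le> pi")
    case False
    have "exp (- \<i> * s) = - exp (- \<i> * (s - pi))"
      using exp_add[of "- \<i> * pi" "- \<i> * (s - pi)"] exp_minus_i_pi by (simp add: algebra_simps)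
    moreover have "c s = c pi - c (s - pi)"
      using add[of pi "s - pi"] s False exp_minus_i_pi by simp
    ultimately show ?thesis
      using small[of "s - pi"] s False by (simp add: algebra_simps)
  qed (use small s in simp)
qed

lemma one_minus_cos_over_square: "((\<lambda>s::real. (2 - 2 * cos s) / s\<^sup>2) \<longlongrightarrow> 1) (at_right 0)"
  by real_asymp

lemma cmod_one_minus_exp_square: "(cmod (1 - exp (- (\<i> * s))))\<^sup>2 = 2 - 2 * cos s"
proof -
  have "(cmod (1 - exp (- (\<i> * s))))\<^sup>2 = (1 - cos s)\<^sup>2 + (sin s)\<^sup>2"
    by (simp add: cmod_power2 Re_exp Im_exp)
  then show ?thesis
    using sin_cos_squared_add[of s] by (simp add: power2_eq_square algebra_simps)
qed

lemma Re_exp_mult_one_minus_exp: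
  "Re (exp (- \<i> * t) * (z * (1 - exp (- \<i> * s))))
     = cmod z * (sin (Arg (\<i> * z) - t) - sin (Arg (\<i> * z) - (t + s)))"
proof -
  have polar: "Re (exp (- (\<i> * y)) * z) = cmod z * sin (Arg (\<i> * z) - y)" for y :: real
  proof -
    have "rcis (cmod z) (Arg (\<i> * z)) = \<i> * z"
      using rcis_cmod_Arg[of "\<i> * z"] by (simp add: norm_mult)
    then have "Re z = cmod z * sin (Arg (\<i> * z))" "Im z = - cmod z * cos (Arg (\<i> * z))"
      by (simp_all add: complex_eq_iff)
    then show ?thesis
      by (simp add: Re_exp Im_exp sin_diff algebra_simps)
  qed
  have "exp (- \<i> * t) * (z * (1 - exp (- \<i> * s)))
      = exp (- (\<i> * t)) * z - exp (- (\<i> * complex_of_real (t + s))) * z"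
    by (simp add: algebra_simps flip: exp_add)
  then show ?thesis
    by (simp only: minus_complex.sel polar right_diff_distrib)
qed

lemma set_integral_Icc_eq_Ico:
  fixes f :: "real \<Rightarrow> real"
  assumes "set_integrable lborel {u..v} f"
  shows "(LINT x:{u..v}|lborel. f x) = (LINT x:{u..<v}|lborel. f x)"
proof -
  have "set_integrable lborel {u..<v} f"
    by (rule set_integrable_subset[OF assms]) auto
  then have "set_borel_measurable lborel {u..<v} f" "set_borel_measurable lborel {u..v} f"
    using assms unfolding set_integrable_def set_borel_measurable_def by (auto dest: borel_measurable_integrable)
  moreover have "AE x in lborel. (x \<in> {u..<v}) = (x \<in> {u..v})"
    using AE_lborel_singleton[of v] by (auto elim!: eventually_mono)
  ultimately show ?thesis
    by (rule set_integral_cong_set)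
qed

text \<open>Lebesgue's differentiation theorem: at almost every point the averages of \<open>f\<close> over
  \<open>[x, x + t]\<close> tend to \<open>f x\<close>, while by hypothesis they are difference quotients of \<open>F\<close>.\<close>
lemma AE_eq_deriv_of_interval_integrals:
  fixes f h F :: "real \<Rightarrow> real"
  assumes f: "set_integrable lborel {a..<b} f"
    and F: "\<And>x. (F has_real_derivative h x) (at x)"
    and integral: "\<And>u v. a \<le> u \<Longrightarrow> u \<le> v \<Longrightarrow> v < b
                     \<Longrightarrow> (LINT x:{u..v}|lborel. f x) = F v - F u"
  shows "AE x in lborel. x \<in> {a..<b} \<longrightarrow> f x = h x"
proof -
  define g where "g x = (if x \<in> {a..<b} then f x else 0)" for x
  have "g integrable_on UNIV"
    unfolding g_def integrable_restrict_UNIV by (rule set_borel_integral_eq_integral(1)[OF f])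
  then obtain N where "negligible N" and N: "\<And>x e. x \<notin> N \<Longrightarrow> 0 < e \<Longrightarrow>
      \<exists>d>0. \<forall>t. 0 < t \<and> t < d \<longrightarrow>
        norm (integral (cbox x (x + t *\<^sub>R One)) g /\<^sub>R t ^ DIM(real) - g x) < e"
    using integrable_ccontinuous_explicit[of g] integrable_on_subcbox[of g UNIV] by blast
  have pointwise: "f x = h x" if x: "a < x" "x < b" "x \<notin> N" for x
  proof -
    have average: "((\<lambda>t. integral {x..x + t} g / t) \<longlongrightarrow> g x) (at_right 0)"
      unfolding tendsto_iff eventually_at_right_field dist_real_def
      using N[OF x(3)] by (simp add: divide_inverse_commute) blast
    have quotient: "((\<lambda>t. (F (x + t) - F x) / t) \<longlongrightarrow> h x) (at_right 0)"
      using F[of x] by (simp add: DERIV_def filterlim_at_split)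
    have "\<forall>\<^sub>F t in at_right 0. (F (x + t) - F x) / t = integral {x..x + t} g / t"
      unfolding eventually_at_right_field
    proof (intro exI[of _ "b - x"] conjI allI impI)
      fix t :: real assume "0 < t" "t < b - x"
      then have "set_integrable lborel {x..x + t} f"
        by (intro set_integrable_subset[OF f]) (use x in auto)
      moreover have "integral {x..x + t} g = integral {x..x + t} f"
        using x \<open>t < b - x\<close> by (intro integral_cong) (simp add: g_def)
      ultimately have "integral {x..x + t} g = (LINT y:{x..x + t}|lborel. f y)"
        by (simp add: set_borel_integral_eq_integral(2))
      then show "(F (x + t) - F x) / t = integral {x..x + t} g / t"
        using integral[of x "x + t"] x \<open>0 < t\<close> \<open>t < b - x\<close> by simp
    qed (use x in simp)
    then have "((\<lambda>t. integral {x..x + t} g / t) \<longlongrightarrow> h x) (at_right 0)"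
      by (rule Lim_transform_eventually[OF quotient])
    then have "g x = h x"
      using tendsto_unique[OF trivial_limit_at_right_real average] by simp
    then show ?thesis
      using x by (simp add: g_def)
  qed
  have "AE x in lborel. x \<notin> N"
    using \<open>negligible N\<close> AE_not_in[of N lebesgue] by (simp add: negligible_iff_null_sets AE_completion_iff)
  moreover have "AE x in lborel. x \<noteq> a"
    by (rule AE_lborel_singleton)
  ultimately show ?thesis
    by eventually_elim (auto intro: pointwise)
qed

lemma DERIV_zero_of_zero_sequence:
  fixes \<delta> :: "real \<Rightarrow> real"
  assumes "(\<delta> has_real_derivative L) (at \<theta>)" "\<delta> \<theta> = 0" "\<And>m. \<delta> (\<theta> + inverse (real (Suc m))) = 0"
  shows "L = 0"
proof -
  have "filterlim (\<lambda>m. inverse (real (Suc m))) (at 0) sequentially"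
    unfolding filterlim_at using LIMSEQ_inverse_real_of_nat by auto
  then have "(\<lambda>m. (\<delta> (\<theta> + inverse (real (Suc m))) - \<delta> \<theta>) / inverse (real (Suc m))) \<longlonglongrightarrow> L"
    using assms(1) by (auto simp: DERIV_def intro: filterlim_compose)
  then show ?thesis
    using assms(2,3) by (simp add: LIMSEQ_const_iff)
qed

lemma fisher_eq_AE:
  assumes ae: "\<And>t. AE x in lborel. x \<in> Theta \<longrightarrow> p t x = h t x"
    and "diff_density p \<theta>"
    and h: "\<And>x. ((\<lambda>t. h t x) has_real_derivative h' x) (at \<theta>)"
  shows "fisher p \<theta> = (\<integral>\<^sup>+ x \<in> Theta. ennreal ((h' x)\<^sup>2 / h \<theta> x) \<partial>lborel)"
proof -
  have "AE x in lborel. \<forall>m. x \<in> Theta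
      \<longrightarrow> p (\<theta> + inverse (real (Suc m))) x = h (\<theta> + inverse (real (Suc m))) x"
    by (subst AE_all_countable) (intro allI ae)
  then have "AE x in lborel. x \<in> Theta \<longrightarrow> deriv (\<lambda>t. p t x) \<theta> = h' x \<and> p \<theta> x = h \<theta> x"
    using ae[of \<theta>] \<open>diff_density p \<theta>\<close>[unfolded diff_density_def]
  proof eventually_elim
    case (elim x)
    show ?case
    proof
      assume "x \<in> Theta"
      then have "((\<lambda>t. p t x - h t x) has_real_derivative deriv (\<lambda>t. p t x) \<theta> - h' x) (at \<theta>)"
        using elim by (intro DERIV_diff h) (simp add: DERIV_deriv_iff_real_differentiable)
      then have "deriv (\<lambda>t. p t x) \<theta> - h' x = 0"
        by (rule DERIV_zero_of_zero_sequence) (use elim \<open>x \<in> Theta\<close> in auto)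
      then show "deriv (\<lambda>t. p t x) \<theta> = h' x \<and> p \<theta> x = h \<theta> x"
        using elim \<open>x \<in> Theta\<close> by simp
    qed
  qed
  then show ?thesis
    unfolding fisher_def by (intro nn_integral_cong_AE) (auto elim!: eventually_mono split: split_indicator)
qed

lemma nn_integral_periodic_shift_less_period:
  fixes G :: "real \<Rightarrow> ennreal"
  assumes [measurable]: "G \<in> borel_measurable borel" and per: "\<And>y. G (y + L) = G y"
    and "0 \<le> s" "s < L"
  shows "(\<integral>\<^sup>+x\<in>{0..<L}. G (x + s) \<partial>lborel) = (\<integral>\<^sup>+x\<in>{0..<L}. G x \<partial>lborel)"
proof -
  have "(\<integral>\<^sup>+x\<in>{0..<L}. G (x + s) \<partial>lborel) = (\<integral>\<^sup>+y. G y * indicator {0..<L} (y - s) \<partial>lborel)"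
    using nn_integral_real_affine[of "\<lambda>y. G y * indicator {0..<L} (y - s)" 1 s] by (simp add: add.commute)
  also have "\<dots> = (\<integral>\<^sup>+y\<in>{s..<L}. G y \<partial>lborel) + (\<integral>\<^sup>+y\<in>{L..<L + s}. G y \<partial>lborel)"
    using assms(3,4)
    by (subst nn_integral_add[symmetric]) (auto intro!: nn_integral_cong split: split_indicator)
  also have "(\<integral>\<^sup>+y\<in>{L..<L + s}. G y \<partial>lborel) = (\<integral>\<^sup>+y\<in>{0..<s}. G y \<partial>lborel)"
    using nn_integral_real_affine[of "\<lambda>y. G y * indicator {L..<L + s} y" 1 L]
    by (simp add: per add.commute indicator_def)
  also have "(\<integral>\<^sup>+y\<in>{s..<L}. G y \<partial>lborel) + (\<integral>\<^sup>+y\<in>{0..<s}. G y \<partial>lborel)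
      = (\<integral>\<^sup>+x\<in>{0..<L}. G x \<partial>lborel)"
    using assms(3,4)
    by (subst nn_integral_add[symmetric]) (auto intro!: nn_integral_cong split: split_indicator)
  finally show ?thesis .
qed

lemma nn_integral_periodic_shift:
  fixes G :: "real \<Rightarrow> ennreal"
  assumes "G \<in> borel_measurable borel" and per: "\<And>y. G (y + L) = G y" and "0 < L"
  shows "(\<integral>\<^sup>+x\<in>{0..<L}. G (x + s) \<partial>lborel) = (\<integral>\<^sup>+x\<in>{0..<L}. G x \<partial>lborel)"
proof -
  interpret periodic_fun_simple G L
    by unfold_locales (rule per)
  define k where "k = \<lfloor>s / L\<rfloor>"
  have "G (x + s) = G (x + (s - of_int k * L))" for x
    using plus_of_int[of "x + (s - of_int k * L)" k] by simp
  moreover have "0 \<le> s - of_int k * L" "s - of_int k * L < L"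
    using floor_divide_lower[OF \<open>0 < L\<close>, of s] floor_divide_upper[OF \<open>0 < L\<close>, of s]
    by (auto simp: k_def algebra_simps)
  ultimately show ?thesis
    using nn_integral_periodic_shift_less_period[OF assms(1) per] by simp
qed

section \<open>Cardioid densities\<close>

definition cardioid_density :: "real \<Rightarrow> real \<Rightarrow> real \<Rightarrow> real" where
  "cardioid_density r \<mu> x = (1 + r * cos (x - \<mu>)) / (2 * pi)"

definition cardioid_cdf :: "real \<Rightarrow> real \<Rightarrow> real \<Rightarrow> real" where
  "cardioid_cdf r \<mu> x = (x + r * sin (x - \<mu>)) / (2 * pi)"

text \<open>The Fisher information density \<open>(\<partial>\<^sub>\<mu> f)\<^sup>2 / f\<close> of the cardioid family
  \<open>f = cardioid_density r \<mu>\<close>, as a function of \<open>y = x - \<mu>\<close>.\<close>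
definition cardioid_fisher_density :: "real \<Rightarrow> real \<Rightarrow> real" where
  "cardioid_fisher_density r y = (r * sin y)\<^sup>2 / (2 * pi * (1 + r * cos y))"

lemma cardioid_cdf_has_derivative:
  "(cardioid_cdf r \<mu> has_real_derivative cardioid_density r \<mu> x) (at x within S)"
  unfolding cardioid_cdf_def cardioid_density_def
  by (auto intro!: derivative_eq_intros simp: field_simps)

lemma cardioid_cdf_shift: "cardioid_cdf r (\<mu> - u) (x - u) = cardioid_cdf r \<mu> x - u / (2 * pi)"
  by (simp add: cardioid_cdf_def field_simps)

lemma cardioid_density_integral:
  assumes "u \<le> v"
  shows "(LINT x:{u..v}|lborel. cardioid_density r \<mu> x) = cardioid_cdf r \<mu> v - cardioid_cdf r \<mu> u"
  unfolding set_lebesgue_integral_def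
proof (rule integral_FTC_atLeastAtMost[OF assms])
  show "(cardioid_cdf r \<mu> has_vector_derivative cardioid_density r \<mu> x) (at x within {u..v})" for x
    using cardioid_cdf_has_derivative by (simp add: has_real_derivative_iff_has_vector_derivative)
  show "continuous_on {u..v} (cardioid_density r \<mu>)"
    unfolding cardioid_density_def by (intro continuous_intros) simp
qed

lemma cardioid_fisher_density_mono:
  assumes "0 \<le> r" "r \<le> R" "R \<le> 1"
  shows "cardioid_fisher_density r y \<le> cardioid_fisher_density R y"
proof (cases "sin y = 0")
  case False
  then have "0 < (sin y)\<^sup>2"
    by simp
  then have "(cos y)\<^sup>2 < 1"
    using sin_cos_squared_add[of y] by linarith
  then have "\<bar>cos y\<bar> < 1"
    by (simp add: abs_square_less_1)
  moreover have "r * \<bar>cos y\<bar> \<le> \<bar>cos y\<bar>" "R * \<bar>cos y\<bar> \<le> \<bar>cos y\<bar>"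
    using assms mult_right_mono[of _ 1 "\<bar>cos y\<bar>"] by simp_all
  ultimately have pos: "0 < 1 + r * cos y" "0 < 1 + R * cos y"
    using abs_ge_minus_self[of "r * cos y"] abs_ge_minus_self[of "R * cos y"] assms
    by (simp_all add: abs_mult)
  have "0 \<le> R + r + r * R * cos y"
    using assms mult_left_mono[of "- cos y" 1 "r * R"] mult_left_le[of R r] by auto
  then have "0 \<le> (R - r) * (R + r + r * R * cos y)"
    using assms by simp
  then have "r\<^sup>2 * (1 + R * cos y) \<le> R\<^sup>2 * (1 + r * cos y)"
    by (simp add: power2_eq_square algebra_simps)
  then have "r\<^sup>2 / (1 + r * cos y) \<le> R\<^sup>2 / (1 + R * cos y)"
    unfolding frac_le_eq[OF pos[THEN less_imp_neq, THEN not_sym]] using pos by (intro divide_nonpos_pos mult_pos_pos) simp_all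
  then have "r\<^sup>2 / (1 + r * cos y) * ((sin y)\<^sup>2 / (2 * pi))
      \<le> R\<^sup>2 / (1 + R * cos y) * ((sin y)\<^sup>2 / (2 * pi))"
    by (rule mult_right_mono) simp
  then show ?thesis
    by (simp add: cardioid_fisher_density_def power_mult_distrib mult_ac)
qed (simp add: cardioid_fisher_density_def)

text \<open>The phase drops out because \<open>cardioid_fisher_density r\<close> is \<open>2\<pi>\<close>-periodic.\<close>
lemma fisher_cardioid_family:
  assumes p: "\<And>t. AE x in lborel. x \<in> Theta \<longrightarrow> p t x = cardioid_density r (\<mu> t) x"
    and "diff_density p \<theta>" and \<mu>: "(\<mu> has_real_derivative \<sigma>) (at \<theta>)" and "\<bar>\<sigma>\<bar> = 1"
  shows "fisher p \<theta> = (\<integral>\<^sup>+x\<in>Theta. ennreal (cardioid_fisher_density r x) \<partial>lborel)"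
proof -
  define c where "c = \<mu> \<theta>"
  have integrand: "(\<sigma> * r * sin (x - c) / (2 * pi))\<^sup>2 / cardioid_density r c x
      = cardioid_fisher_density r (x + - c)" for x
  proof -
    have "\<sigma>\<^sup>2 = 1"
      using \<open>\<bar>\<sigma>\<bar> = 1\<close> by (simp add: abs_square_eq_1)
    then show ?thesis
      by (simp add: cardioid_density_def cardioid_fisher_density_def power_mult_distrib power_divide
          power2_eq_square)
  qed
  have "fisher p \<theta> = (\<integral>\<^sup>+x\<in>Theta. ennreal ((\<sigma> * r * sin (x - c) / (2 * pi))\<^sup>2
                                              / cardioid_density r c x) \<partial>lborel)"
    unfolding c_def
    by (rule fisher_eq_AE[OF p \<open>diff_density p \<theta>\<close>])
      (auto simp: cardioid_density_def intro!: derivative_eq_intros \<mu>)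
  also have "\<dots> = (\<integral>\<^sup>+x\<in>{0..<2 * pi}. ennreal (cardioid_fisher_density r (x + - c)) \<partial>lborel)"
    by (simp add: integrand Theta_def)
  also have "\<dots> = (\<integral>\<^sup>+x\<in>Theta. ennreal (cardioid_fisher_density r x) \<partial>lborel)"
    unfolding Theta_def
    by (rule nn_integral_periodic_shift) (simp_all add: cardioid_fisher_density_def)
  finally show ?thesis .
qed

section \<open>Covariant POVMs produce cardioid densities\<close>

lemma povm_sums:
  assumes "is_povm M" "\<And>k. A k \<in> sets borel" "\<And>k. A k \<subseteq> Theta" "disjoint_family A"
  shows "(\<lambda>k. M (A k)) sums M (\<Union>k. A k)"
  using assms unfolding is_povm_def by blast

lemma povm_empty: "is_povm M \<Longrightarrow> M {} = 0"
  using povm_sums[of M "\<lambda>_. {}"] summable_LIMSEQ_zero[of "\<lambda>k. M {}"]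
  by (simp add: disjoint_family_on_def sums_iff LIMSEQ_const_iff)

lemma povm_Un:
  assumes "is_povm M" "A \<in> sets borel" "B \<in> sets borel" "A \<subseteq> Theta" "B \<subseteq> Theta" "A \<inter> B = {}"
  shows "M (A \<union> B) = M A + M B"
proof -
  define C where "C k = (if k = 0 then A else if k = 1 then B else {})" for k :: nat
  have "(\<lambda>k. M (C k)) sums M (\<Union>k. C k)"
    by (rule povm_sums) (use assms in \<open>auto simp: C_def disjoint_family_on_def\<close>)
  moreover have "(\<Union>k. C k) = A \<union> B"
    by (auto simp: C_def split: if_splits)
  moreover have "(\<lambda>k. M (C k)) sums (\<Sum>k\<in>{0, 1}. M (C k))"
    by (rule sums_finite) (auto simp: C_def povm_empty[OF assms(1)])
  ultimately show ?thesis
    by (simp add: C_def sums_iff)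
qed

lemma shift_set_Ico:
  assumes "0 \<le> g" "0 \<le> s" "g + s \<le> 2 * pi"
  shows "shift_set g {0..<s} = {g..<g + s}"
proof (intro equalityI subsetI)
  fix x assume "x \<in> shift_set g {0..<s}"
  then obtain y and k :: int where xy: "x \<in> Theta" "y \<in> {0..<s}" "x = g + y + 2 * pi * k"
    unfolding shift_set_def by blast
  moreover have "0 \<le> x" "x < 2 * pi" "0 \<le> y" "y < s"
    using xy(1,2) by (simp_all add: Theta_def)
  ultimately have "2 * pi * real_of_int k < 2 * pi" "- (2 * pi) < 2 * pi * real_of_int k"
    using assms by linarith+
  then have "k < 1" "-1 < k"
    using mult_less_cancel_left_pos[of "2 * pi" "-1" "real_of_int k"] by simp_all
  then have "k = 0"
    by simp
  then show "x \<in> {g..<g + s}"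
    using xy by simp
next
  fix x assume "x \<in> {g..<g + s}"
  then have "x \<in> Theta" "x - g \<in> {0..<s}" "x = g + (x - g) + 2 * pi * of_int (0::int)"
    using assms by (auto simp: Theta_def)
  then show "x \<in> shift_set g {0..<s}"
    unfolding shift_set_def by blast
qed

locale covariant_povm =
  fixes n a :: "real^3" and M :: "real set \<Rightarrow> cmat"
  assumes unit_n: "norm n = 1" and unit_a: "norm a = 1"
    and povm: "is_povm M" and covariant: "covariant n M"
begin

definition weight :: "cmat \<Rightarrow> real \<Rightarrow> real" where
  "weight P s = Re (trace (M {0..<s} ** (P ** bloch a ** P)))"

definition coherence :: "real \<Rightarrow> complex" where
  "coherence s = trace (M {0..<s} ** rho_pm n a)"

definition kappa :: complex where
  "kappa = coherence pi / 2"

definition radius :: real where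
  "radius = 4 * pi * cmod kappa"

definition phase :: real where
  "phase = Arg (\<i> * kappa)"

lemma M_shift:
  assumes "0 \<le> g" "g < 2 * pi" "0 \<le> s" "g + s \<le> 2 * pi"
  shows "M {g..<g + s} = adj (Uop n g) ** M {0..<s} ** Uop n g"
  using covariant[unfolded covariant_def, rule_format, of "{0..<s}" g] assms shift_set_Ico[of g s]
  by (simp add: Theta_def)

lemma M_split:
  assumes "0 \<le> g" "g < 2 * pi" "0 \<le> s" "g + s \<le> 2 * pi"
  shows "M {0..<g + s} = M {0..<g} + adj (Uop n g) ** M {0..<s} ** Uop n g"
proof -
  have "{0..<g + s} = {0..<g} \<union> {g..<g + s}"
    using assms by auto
  then show ?thesis
    using povm_Un[OF povm, of "{0..<g}" "{g..<g + s}"] M_shift[OF assms] assms by (auto simp: Theta_def)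
qed

lemma M_Ico_cauchy_schwarz:
  assumes "0 \<le> s" "s \<le> 2 * pi"
  shows "Im (trace (M {0..<s} ** rho_pp n a)) = 0" "Im (trace (M {0..<s} ** rho_mm n a)) = 0"
    and "trace (M {0..<s} ** rho_mp n a) = cnj (coherence s)"
    and "0 \<le> weight (Pplus n) s" "0 \<le> weight (Pminus n) s"
    and "(cmod (coherence s))\<^sup>2 \<le> weight (Pplus n) s * weight (Pminus n) s"
proof -
  have "psd (M {0..<s})"
    using povm assms unfolding is_povm_def by (auto simp: Theta_def)
  from psd_trace_blocks_cauchy_schwarz[OF unit_n unit_a this]
  show "Im (trace (M {0..<s} ** rho_pp n a)) = 0" "Im (trace (M {0..<s} ** rho_mm n a)) = 0"
    and "trace (M {0..<s} ** rho_mp n a) = cnj (coherence s)"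
    and "0 \<le> weight (Pplus n) s" "0 \<le> weight (Pminus n) s"
    and "(cmod (coherence s))\<^sup>2 \<le> weight (Pplus n) s * weight (Pminus n) s"
    by (simp_all add: weight_def coherence_def)
qed

lemma weight_add:
  assumes "P = Pplus n \<or> P = Pminus n" "0 \<le> g" "0 \<le> s" "g + s \<le> 2 * pi"
  shows "weight P (g + s) = weight P g + weight P s"
proof (cases "g < 2 * pi")
  case True
  then show ?thesis
    using assms by (auto simp: weight_def M_split cmat_add_mult trace_add trace_Uop_adj_sandwich_blocks[OF unit_n])
next
  case False
  then have "s = 0"
    using assms by simp
  then show ?thesis
    by (simp add: weight_def povm_empty[OF povm])
qed

lemma coherence_add:
  assumes "0 \<le> g" "0 \<le> s" "g + s \<le> 2 * pi" "g < 2 * pi"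
  shows "coherence (g + s) = coherence g + exp (- \<i> * g) * coherence s"
  using assms by (simp add: coherence_def M_split cmat_add_mult trace_add trace_Uop_adj_sandwich_blocks[OF unit_n])

lemma weight_linear:
  assumes "P = Pplus n \<or> P = Pminus n" "0 \<le> s" "s \<le> 2 * pi"
  shows "weight P s = s / (2 * pi) * Re (trace (P ** bloch a))"
proof -
  interpret complementary_projections "Pplus n" "Pminus n"
    by (rule complementary_projections_Pplus_Pminus[OF unit_n])
  have "M {0..<2 * pi} = mat 1"
    using povm by (simp add: is_povm_def Theta_def)
  then have "weight P (2 * pi) = Re (trace (P ** bloch a))"
    using assms(1) by (auto simp: weight_def trace_PYP trace_QYQ)
  moreover have "weight P s = s * weight P (2 * pi) / (2 * pi)"
    by (rule nonneg_additive_on_interval_linear[OF weight_add[OF assms(1)]])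
      (use assms M_Ico_cauchy_schwarz in auto)
  ultimately show ?thesis
    by simp
qed

lemma coherence_eq:
  assumes "0 \<le> s" "s \<le> 2 * pi"
  shows "coherence s = kappa * (1 - exp (- \<i> * s))"
  unfolding kappa_def by (rule cocycle_on_circle_eq[OF coherence_add assms])

lemma radius_le: "radius \<le> sqrt (1 - (inner a n)\<^sup>2)"
proof -
  have "(cmod kappa)\<^sup>2 * ((2 - 2 * cos s) / s\<^sup>2) \<le> (1 - (inner a n)\<^sup>2) / (16 * pi\<^sup>2)"
    if "0 < s" "s \<le> 2 * pi" for s
  proof -
    have "(cmod kappa)\<^sup>2 * (2 - 2 * cos s) = (cmod (coherence s))\<^sup>2"
      using that by (simp add: coherence_eq norm_mult power_mult_distrib cmod_one_minus_exp_square)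
    also have "\<dots> \<le> weight (Pplus n) s * weight (Pminus n) s"
      using M_Ico_cauchy_schwarz that by simp
    also have "\<dots> = s\<^sup>2 * ((1 - (inner a n)\<^sup>2) / (16 * pi\<^sup>2))"
      using that by (simp add: weight_linear trace_Pplus_bloch trace_Pminus_bloch power2_eq_square field_simps)
    finally show ?thesis
      using that by (simp add: field_simps)
  qed
  then have "(cmod kappa)\<^sup>2 * 1 \<le> (1 - (inner a n)\<^sup>2) / (16 * pi\<^sup>2)"
    by (intro tendsto_upperbound[OF tendsto_mult_left[OF one_minus_cos_over_square]])
      (auto simp: eventually_at_right_field intro!: exI[of _ "2 * pi"])
  then have "radius\<^sup>2 \<le> 1 - (inner a n)\<^sup>2"
    by (simp add: radius_def field_simps)
  then show ?thesis
    by (simp add: real_le_rsqrt)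
qed

lemma trace_Ico_mult_rho_t:
  assumes "0 \<le> s" "s \<le> 2 * pi"
  shows "Re (trace (M {0..<s} ** rho_t n a t))
    = cardioid_cdf radius (phase - t) s - cardioid_cdf radius (phase - t) 0"
proof -
  have "Re (trace (M {0..<s} ** rho_t n a t))
      = weight (Pplus n) s + weight (Pminus n) s + 2 * Re (exp (- \<i> * t) * coherence s)"
    using M_Ico_cauchy_schwarz[OF assms]
    by (simp add: rho_t_blocks[OF unit_n] matrix_add_ldistrib smat_mult_right trace_add trace_smat
        weight_def coherence_def Re_exp Im_exp)
  also have "Re (exp (- \<i> * t) * coherence s) = cmod kappa * (sin (phase - t) - sin (phase - (t + s)))"
    by (simp only: coherence_eq[OF assms] Re_exp_mult_one_minus_exp phase_def)
  finally have "Re (trace (M {0..<s} ** rho_t n a t)) = weight (Pplus n) s + weight (Pminus n) s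
      + 2 * (cmod kappa * (sin (phase - t) - sin (phase - (t + s))))" .
  moreover have "sin (t - phase) = - sin (phase - t)" "sin (s + t - phase) = - sin (phase - (t + s))"
    by (simp_all add: add.commute flip: sin_minus)
  ultimately show ?thesis
    using assms
    by (simp add: weight_linear trace_Pplus_bloch trace_Pminus_bloch cardioid_cdf_def radius_def field_simps)
qed

lemma trace_interval_mult_rho_t:
  assumes "0 \<le> u" "u \<le> v" "v < 2 * pi"
  shows "Re (trace (M {u..<v} ** rho_t n a t))
    = cardioid_cdf radius (phase - t) v - cardioid_cdf radius (phase - t) u"
proof -
  have "trace (M {u..<v} ** rho_t n a t) = trace (M {0..<v - u} ** rho_t n a (u + t))"
    using M_shift[of u "v - u"] assms by (simp add: trace_adj_sandwich_mult Uop_sandwich_rho_t[OF unit_n])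
  then show ?thesis
    using trace_Ico_mult_rho_t[of "v - u" "u + t"] assms
      cardioid_cdf_shift[of radius "phase - t" u v] cardioid_cdf_shift[of radius "phase - t" u u]
    by (simp add: diff_diff_eq add.commute)
qed

lemma density_cardioid:
  assumes "is_density n a M p"
  shows "AE x in lborel. x \<in> Theta \<longrightarrow> p t x = cardioid_density radius (phase - t) x"
proof -
  have p: "set_integrable lborel {0..<2 * pi} (p t)"
    and trace: "\<And>B. B \<in> sets borel \<Longrightarrow> B \<subseteq> Theta
                  \<Longrightarrow> trace (M B ** rho_t n a t) = (LINT x:B|lborel. p t x)"
    using assms unfolding is_density_def Theta_def by auto
  show ?thesis
    unfolding Theta_def
  proof (rule AE_eq_deriv_of_interval_integrals[OF p cardioid_cdf_has_derivative])
    fix u v :: real assume uv: "0 \<le> u" "u \<le> v" "v < 2 * pi"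
    have "(LINT x:{u..v}|lborel. p t x) = (LINT x:{u..<v}|lborel. p t x)"
      by (rule set_integral_Icc_eq_Ico, rule set_integrable_subset[OF p]) (use uv in auto)
    also have "\<dots> = Re (trace (M {u..<v} ** rho_t n a t))"
      using trace[of "{u..<v}"] uv by (simp add: Theta_def)
    finally show "(LINT x:{u..v}|lborel. p t x)
        = cardioid_cdf radius (phase - t) v - cardioid_cdf radius (phase - t) u"
      using trace_interval_mult_rho_t[OF uv] by simp
  qed
qed

end

lemma Proj_minus_half: "Proj n (- (1/2)) = Pminus n"
  by (simp add: Pminus_def)

lemma trace_Mstar_dens_mult_rho_t:
  assumes "norm n = 1" "norm a = 1" "\<bar>inner a n\<bar> < 1"
  shows "trace (Mstar_dens n a x ** rho_t n a t)
    = complex_of_real (cardioid_density (sqrt (1 - (inner a n)\<^sup>2)) t x)"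
proof -
  define \<alpha> where "\<alpha> = (1 + inner a n) / 2"
  define \<beta> where "\<beta> = (1 - inner a n) / 2"
  have pos: "0 < \<alpha>" "0 < \<beta>"
    using assms(3) by (auto simp: \<alpha>_def \<beta>_def)
  have "trace (Mstar_dens n a x ** rho_t n a t)
      = complex_of_real (1 / (2 * pi))
        * (complex_of_real (\<beta> * \<beta> / sqrt (\<beta> * \<beta>) + \<alpha> * \<alpha> / sqrt (\<alpha> * \<alpha>))
           + (exp (\<i> * x) * exp (- (\<i> * t)) + exp (- (\<i> * x)) * exp (\<i> * t))
             * complex_of_real (\<alpha> * \<beta> / sqrt (\<alpha> * \<beta>)))"
    unfolding Mstar_dens_def smat_mult_left trace_smat sum_cmat_mult trace_sum
    by (simp add: Pplus_def[symmetric] Proj_minus_half smat_mult_left trace_smat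
        trace_blocks_mult_rho_t[OF assms(1,2)] trace_Pplus_bloch trace_Pminus_bloch
        \<alpha>_def[symmetric] \<beta>_def[symmetric] mult.commute[of \<beta> \<alpha>] algebra_simps)
  moreover have "exp (\<i> * x) * exp (- (\<i> * t)) + exp (- (\<i> * x)) * exp (\<i> * t) = complex_of_real (2 * cos (x - t))"
    by (simp add: complex_eq_iff Re_exp Im_exp cos_diff)
  moreover have "\<beta> * \<beta> / sqrt (\<beta> * \<beta>) + \<alpha> * \<alpha> / sqrt (\<alpha> * \<alpha>) = \<beta> + \<alpha>"
    using pos by simp
  moreover have "\<beta> + \<alpha> = 1"
    by (simp add: \<alpha>_def \<beta>_def field_simps)
  moreover have "\<alpha> * \<beta> / sqrt (\<alpha> * \<beta>) = sqrt (\<alpha> * \<beta>)"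
    using pos by (simp add: real_div_sqrt)
  moreover have radius: "sqrt (1 - (inner a n)\<^sup>2) = 2 * sqrt (\<alpha> * \<beta>)"
    by (simp add: \<alpha>_def \<beta>_def real_sqrt_divide power2_eq_square algebra_simps)
  ultimately show ?thesis
    unfolding radius
    by (simp only: of_real_mult[symmetric] of_real_add[symmetric]) (simp add: cardioid_density_def field_simps)
qed

lemma trace_Mstar_mult:
  assumes "B \<in> sets borel" "B \<subseteq> Theta"
  shows "trace (Mstar n a B ** Y) = (LINT x:B|lborel. trace (Mstar_dens n a x ** Y))"
proof -
  have "set_integrable lborel {0..2 * pi} (Mstar_dens n a)"
    unfolding Mstar_dens_def smat_def divide_inverse
    by (intro borel_integrable_atLeastAtMost' continuous_intros)
  then have "integrable lborel (\<lambda>x. indicator B x *\<^sub>R Mstar_dens n a x)"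
    unfolding set_integrable_def[symmetric]
    by (rule set_integrable_subset) (use assms in \<open>auto simp: Theta_def\<close>)
  then show ?thesis
    unfolding Mstar_def set_lebesgue_integral_def
    by (subst integral_bounded_linear[OF bounded_linear_trace_mult, symmetric])
      (simp_all add: trace_scaleR_mult)
qed

lemma Mstar_density_cardioid:
  assumes "norm n = 1" "norm a = 1" "\<bar>inner a n\<bar> < 1" and "is_density n a (Mstar n a) q"
  shows "AE x in lborel. x \<in> Theta \<longrightarrow> q t x = cardioid_density (sqrt (1 - (inner a n)\<^sup>2)) t x"
proof -
  have q: "set_integrable lborel {0..<2 * pi} (q t)"
    and trace: "\<And>B. B \<in> sets borel \<Longrightarrow> B \<subseteq> Theta
                  \<Longrightarrow> trace (Mstar n a B ** rho_t n a t) = (LINT x:B|lborel. q t x)"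
    using assms(4) unfolding is_density_def Theta_def by auto
  show ?thesis
    unfolding Theta_def
  proof (rule AE_eq_deriv_of_interval_integrals[OF q cardioid_cdf_has_derivative])
    fix u v :: real assume uv: "0 \<le> u" "u \<le> v" "v < 2 * pi"
    then have B: "{u..v} \<in> sets borel" "{u..v} \<subseteq> Theta"
      by (auto simp: Theta_def)
    have "complex_of_real (LINT x:{u..v}|lborel. q t x) = trace (Mstar n a {u..v} ** rho_t n a t)"
      using trace[OF B] by simp
    also have "\<dots> = (LINT x:{u..v}|lborel. complex_of_real (cardioid_density (sqrt (1 - (inner a n)\<^sup>2)) t x))"
      by (simp add: trace_Mstar_mult[OF B] trace_Mstar_dens_mult_rho_t[OF assms(1-3)])
    also have "\<dots> = complex_of_real (LINT x:{u..v}|lborel. cardioid_density (sqrt (1 - (inner a n)\<^sup>2)) t x)"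
      unfolding set_lebesgue_integral_def by (simp add: scaleR_conv_of_real flip: integral_complex_of_real)
    finally have "(LINT x:{u..v}|lborel. q t x) = (LINT x:{u..v}|lborel. cardioid_density (sqrt (1 - (inner a n)\<^sup>2)) t x)"
      by (simp only: of_real_eq_iff)
    then show "(LINT x:{u..v}|lborel. q t x)
        = cardioid_cdf (sqrt (1 - (inner a n)\<^sup>2)) t v - cardioid_cdf (sqrt (1 - (inner a n)\<^sup>2)) t u"
      using cardioid_density_integral[OF uv(2)] by simp
  qed
qed

theorem theorem4:
  fixes n a :: "real^3" and \<theta> :: real
    and M :: "real set \<Rightarrow> complex^2^2"
    and p q :: "real \<Rightarrow> real \<Rightarrow> real"
  assumes "norm n = 1" and "norm a = 1"
    and "inner a n \<noteq> 1" and "inner a n \<noteq> -1"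
    and "\<theta> \<in> Theta"
    and "is_povm M" and "covariant n M"
    and "is_density n a M p" and "diff_density p \<theta>"
    and "is_density n a (Mstar n a) q" and "diff_density q \<theta>"
  shows "fisher p \<theta> \<le> fisher q \<theta>"
proof -
  interpret covariant_povm n a M
    using assms by unfold_locales
  have "\<bar>inner a n\<bar> < 1"
    using Cauchy_Schwarz_ineq2[of a n] assms(1-4) by auto
  have "fisher p \<theta> = (\<integral>\<^sup>+x\<in>Theta. ennreal (cardioid_fisher_density radius x) \<partial>lborel)"
    by (rule fisher_cardioid_family[OF density_cardioid[OF assms(8)] assms(9)])
      (auto intro!: derivative_eq_intros)
  also have "\<dots> \<le> (\<integral>\<^sup>+x\<in>Theta. ennreal (cardioid_fisher_density (sqrt (1 - (inner a n)\<^sup>2)) x)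
                     \<partial>lborel)"
    using radius_le \<open>\<bar>inner a n\<bar> < 1\<close>
    by (intro nn_integral_mono mult_right_mono ennreal_leI cardioid_fisher_density_mono)
      (auto simp: radius_def)
  also have "\<dots> = fisher q \<theta>"
    by (rule fisher_cardioid_family[OF Mstar_density_cardioid[OF assms(1,2) \<open>\<bar>inner a n\<bar> < 1\<close> assms(10)]
          assms(11), symmetric])
      (auto intro!: derivative_eq_intros)
  finally show ?thesis .
qed

end
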